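(* For every Hessenberg space $H$ of $n\times n$ matrices, the variety $X_H=\{[g]\in GL_n(\mathbb{C})/B : g^{-1}E_{1n}g\in H\}$ is a union of Schubert varieties $Y_w$.
   Context: $B$ is the group of invertible upper-triangular $n\times n$ complex matrices; $[g]\in GL_n(\mathbb{C})/B$ denotes the flag whose $k$-dimensional subspace is spanned by the first $k$ columns of $g$. $E_{kl}$ denotes the matrix unit with $1$ in entry $(k,l)$ and $0$ elsewhere. A permutation $w$ of $\{1,\dots,n\}$ is identified with the permutation matrix satisfying $we_k=e_{w(k)}$ for the standard basis $e_1,\dots,e_n$. The Schubert variety $Y_w$ is the closure of $\{[bw]: b\in B\}$. A Hessenberg space is a subspace of the form $H_h=\operatorname{span}\{E_{kl}: k\le h(l)\}$ for a nondecreasing function $h:\{1,\dots,n\}\to\{0,1,\dots,n\}$. *)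

theory Defs
  imports "HOL-Analysis.Analysis" "HOL-Combinatorics.Permutations"
begin

type_synonym 'n cmat = "((complex,'n) vec,'n) vec"

text \<open>Index set {1..n} is modelled by a finite linearly ordered type 'n; idx k is the
  1-based position of k. Matrices are 'n cmat with A$i$j the (i,j) entry.\<close>

definition idx :: "'n::{finite,wellorder} \<Rightarrow> nat" where
  "idx k = card {i. i \<le> k}"

definition GL :: "(('n::finite) cmat) set" where
  "GL = {g. invertible g}"

definition upper_tri :: "(('n::{finite,wellorder}) cmat) set" where
  "upper_tri = {b. invertible b \<and> (\<forall>i j. j < i \<longrightarrow> b$i$j = 0)}"

definition Eunit :: "'n::{finite,wellorder} \<Rightarrow> 'n \<Rightarrow> 'n cmat" where
  "Eunit k l = (\<chi> i j. if i = k \<and> j = l then 1 else 0)"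

definition perm_mat :: "('n::{finite,wellorder} \<Rightarrow> 'n) \<Rightarrow> 'n cmat" where
  "perm_mat w = (\<chi> i j. if i = w j then 1 else 0)"

text \<open>Flag [g]: k-th subspace is the complex span of the first k columns of g, i.e. the
  set of g x with x supported on the first k coordinates.\<close>
definition flag :: "'n cmat \<Rightarrow> nat \<Rightarrow> (complex,'n::{finite,wellorder}) vec set" where
  "flag g k = {g *v x | x. \<forall>j. k < idx j \<longrightarrow> x$j = 0}"

definition flag_variety :: "(nat \<Rightarrow> (complex,'n::{finite,wellorder}) vec set) set" where
  "flag_variety = flag ` GL"

text \<open>Quotient topology on GL_n/B induced by the map g \<mapsto> [g] from GL_n (with the
  subspace topology of the Euclidean topology on matrices).\<close>
definition flag_top :: "(nat \<Rightarrow> (complex,'n::{finite,wellorder}) vec set) topology" where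
  "flag_top = topology (\<lambda>U. U \<subseteq> flag_variety \<and>
       openin (subtopology euclidean GL) {g \<in> GL. flag g \<in> U})"

definition schubert :: "('n::{finite,wellorder} \<Rightarrow> 'n) \<Rightarrow> (nat \<Rightarrow> (complex,'n) vec set) set" where
  "schubert w = flag_top closure_of {flag (b ** perm_mat w) | b. b \<in> upper_tri}"

text \<open>Hessenberg space H_h = span{E_kl : k \<le> h l}, written out as the matrices vanishing
  at all entries (k,l) with k > h l.\<close>
definition hessenberg_fun :: "('n::{finite,wellorder} \<Rightarrow> nat) \<Rightarrow> bool" where
  "hessenberg_fun h \<longleftrightarrow> mono h \<and> (\<forall>l. h l \<le> CARD('n))"

definition hess_space :: "('n::{finite,wellorder} \<Rightarrow> nat) \<Rightarrow> ('n cmat) set" where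
  "hess_space h = {A. \<forall>k l. h l < idx k \<longrightarrow> A$k$l = 0}"

definition XH :: "('n cmat) set \<Rightarrow> (nat \<Rightarrow> (complex,'n::{finite,wellorder}) vec set) set" where
  "XH H = {flag g | g. g \<in> GL \<and> matrix_inv g ** Eunit (LEAST i. True) (GREATEST i. True) ** g \<in> H}"

end

(*
  X_H is closed in GL_n/B: it is the image of {g. g^-1 E_1n g \<in> H}, a closed subset of GL_n
  that is saturated for the right action of B. It is also stable under the left action of B:
  for upper triangular b the conjugate b^-1 E_1n b is a scalar multiple of E_1n, and because h is
  nondecreasing, H is stable under multiplication by upper triangular matrices on both sides.
  By the Bruhat decomposition every point of GL_n/B lies in a cell B w B/B; a closed B-stable set
  meeting that cell contains it, hence contains its closure, the Schubert variety Y_w.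
*)

theory Submission
  imports Defs
begin

lemma strict_mono_idx: "strict_mono (idx :: 'n::{finite,wellorder} \<Rightarrow> nat)"
proof (rule strict_monoI)
  fix i j :: 'n assume "i < j"
  then have "{k. k \<le> i} \<subseteq> {k. k \<le> j}" "j \<in> {k. k \<le> j} - {k. k \<le> i}" by auto
  then have "{k. k \<le> i} \<subset> {k. k \<le> j}" by blast
  then show "idx i < idx j" unfolding idx_def by (simp add: psubset_card_mono)
qed

lemma idx_less_iff: "idx i < idx j \<longleftrightarrow> i < (j :: 'n::{finite,wellorder})"
  using strict_mono_idx by (rule strict_mono_less)

lemma idx_le_iff: "idx i \<le> idx j \<longleftrightarrow> i \<le> (j :: 'n::{finite,wellorder})"
  using strict_mono_idx by (rule strict_mono_less_eq)

lemma matrix_inv_right: "invertible A \<Longrightarrow> A ** matrix_inv A = mat 1"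
  and matrix_inv_left: "invertible A \<Longrightarrow> matrix_inv A ** A = mat 1"
  for A :: "'a::semiring_1^'n^'m"
  using someI_ex[of "\<lambda>A'. A ** A' = mat 1 \<and> A' ** A = mat 1"]
  unfolding invertible_def matrix_inv_def by auto

lemma invertible_matrix_inv: "invertible A \<Longrightarrow> invertible (matrix_inv A)"
  for A :: "'a::semiring_1^'n^'m"
  using matrix_inv_left matrix_inv_right invertible_def by blast

lemma matrix_inv_unique:
  fixes A :: "'a::semiring_1^'n^'n"
  assumes "invertible A" "A ** B = mat 1"
  shows "matrix_inv A = B"
  by (metis assms matrix_inv_left matrix_mul_assoc matrix_mul_lid matrix_mul_rid)

lemma matrix_inv_mult:
  fixes A B :: "'a::semiring_1^'n^'n"
  assumes "invertible A" "invertible B"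
  shows "matrix_inv (A ** B) = matrix_inv B ** matrix_inv A"
proof (rule matrix_inv_unique)
  show "invertible (A ** B)" using assms by (rule invertible_mult)
  have "A ** B ** (matrix_inv B ** matrix_inv A) = A ** (B ** matrix_inv B) ** matrix_inv A"
    by (simp add: matrix_mul_assoc)
  then show "A ** B ** (matrix_inv B ** matrix_inv A) = mat 1"
    by (simp add: assms matrix_inv_right)
qed

lemma invertible_mat_1: "invertible (mat 1 :: 'a::semiring_1^'n^'n)"
  unfolding invertible_def by (metis matrix_mul_lid)

lemma matrix_vector_mult_axis: "(A *v axis j 1) $ i = A $ i $ j"
  for A :: "'a::semiring_1^'n^'m"
  by (simp add: matrix_vector_mult_def axis_def if_distrib cong: if_cong)

lemma matrix_inv_nth_cramer:
  fixes A :: "'a::field^'n^'n"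
  assumes "invertible A"
  shows "matrix_inv A $ i $ j = det (\<chi> r s. if s = i then axis j 1 $ r else A $ r $ s) / det A"
proof -
  have d: "det A \<noteq> 0" using assms invertible_det_nz by blast
  have "A *v (matrix_inv A *v axis j 1) = axis j 1"
    by (simp add: matrix_vector_mul_assoc assms matrix_inv_right)
  then have "matrix_inv A *v axis j 1 = (\<chi> k. det (\<chi> r s. if s = k then axis j 1 $ r else A $ r $ s) / det A)"
    using cramer[OF d] by blast
  then have "(matrix_inv A *v axis j 1) $ i = det (\<chi> r s. if s = i then axis j 1 $ r else A $ r $ s) / det A"
    by simp
  then show ?thesis by (simp add: matrix_vector_mult_axis)
qed

lemma sum_mult_delta_right: "(\<Sum>k\<in>UNIV. f k * (if k = a then x else 0)) = f a * x"
  for f :: "'n::finite \<Rightarrow> 'a::semiring_0"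
proof -
  have "(\<Sum>k\<in>UNIV. f k * (if k = a then x else 0)) = (\<Sum>k\<in>UNIV. if k = a then f k * x else 0)"
    by (rule sum.cong) simp_all
  then show ?thesis by simp
qed

lemma sum_mult_delta_left: "(\<Sum>k\<in>UNIV. (if a = k then x else 0) * f k) = x * f a"
  for f :: "'n::finite \<Rightarrow> 'a::semiring_0"
proof -
  have "(\<Sum>k\<in>UNIV. (if a = k then x else 0) * f k) = (\<Sum>k\<in>UNIV. if a = k then x * f k else 0)"
    by (rule sum.cong) simp_all
  then show ?thesis by simp
qed

lemma mat_mult_nth: "(mat s ** A) $ i $ j = s * A $ i $ j"
  for A :: "'a::semiring_1^'n^'m"
  by (simp add: matrix_matrix_mult_def mat_def sum_mult_delta_left)

lemma mult_mat_nth: "(A ** mat s) $ i $ j = A $ i $ j * s"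
  for A :: "'a::semiring_1^'n^'m"
  by (simp add: matrix_matrix_mult_def mat_def sum_mult_delta_right)

lemma mat_mult_commute: "mat s ** A = A ** mat s"
  for A :: "'a::comm_semiring_1^'n^'n"
  by (simp add: vec_eq_iff mat_mult_nth mult_mat_nth mult.commute)

definition upper_triangular :: "'a::zero^'n::{finite,wellorder}^'n::{finite,wellorder} \<Rightarrow> bool" where
  "upper_triangular A \<longleftrightarrow> (\<forall>i j. j < i \<longrightarrow> A $ i $ j = 0)"

lemma upper_tri_iff: "b \<in> upper_tri \<longleftrightarrow> invertible b \<and> upper_triangular b"
  by (simp add: upper_tri_def upper_triangular_def)

lemma upper_triangular_mult:
  fixes A B :: "'a::semiring_1^'n::{finite,wellorder}^'n::{finite,wellorder}"
  assumes "upper_triangular A" "upper_triangular B"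
  shows "upper_triangular (A ** B)"
  using assms unfolding upper_triangular_def matrix_matrix_mult_def
  by (auto intro!: sum.neutral) (metis leI less_le_trans mult_zero_left mult_zero_right)

lemma upper_triangular_mat: "upper_triangular (mat s)"
  by (simp add: upper_triangular_def mat_def)

lemma invertible_upper_triangular:
  fixes A :: "'a::field^'n::{finite,wellorder}^'n::{finite,wellorder}"
  assumes "upper_triangular A" "\<And>i. A $ i $ i \<noteq> 0"
  shows "invertible A"
  using det_upperdiagonal[of A] assms by (simp add: upper_triangular_def invertible_det_nz)

lemma upper_triangular_matrix_inv:
  fixes A :: "'a::field^'n::{finite,wellorder}^'n::{finite,wellorder}"
  assumes "invertible A" "upper_triangular A"
  shows "upper_triangular (matrix_inv A)"
  unfolding upper_triangular_def
proof (intro allI impI)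
  fix i j :: 'n assume "j < i"
  let ?C = "\<chi> r s. if s = i then axis j 1 $ r else A $ r $ s"
  have "upper_triangular ?C"
    using assms(2) \<open>j < i\<close> by (auto simp: upper_triangular_def axis_def)
  then have "det ?C = (\<Prod>k\<in>UNIV. ?C $ k $ k)"
    by (simp add: upper_triangular_def det_upperdiagonal)
  also have "\<dots> = 0"
    using \<open>j < i\<close> by (intro prod_zero) (auto simp: axis_def)
  finally show "matrix_inv A $ i $ j = 0"
    by (simp add: matrix_inv_nth_cramer assms(1))
qed

lemma upper_tri_mult: "a \<in> upper_tri \<Longrightarrow> b \<in> upper_tri \<Longrightarrow> a ** b \<in> upper_tri"
  by (simp add: upper_tri_iff invertible_mult upper_triangular_mult)

lemma upper_tri_matrix_inv: "b \<in> upper_tri \<Longrightarrow> matrix_inv b \<in> upper_tri"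
  by (simp add: upper_tri_iff invertible_matrix_inv upper_triangular_matrix_inv)

lemma mat_1_upper_tri: "mat 1 \<in> upper_tri"
  by (simp add: upper_tri_iff invertible_mat_1 upper_triangular_mat)

section \<open>Bruhat decomposition\<close>

lemma column_reduction_upper:
  fixes M :: "'a::field^'n::{finite,wellorder}^'n::{finite,wellorder}"
  assumes "M $ r $ j \<noteq> 0" "\<And>l. l < j \<Longrightarrow> M $ r $ l = 0"
  obtains c where "invertible c" "upper_triangular c"
    "\<And>i l. (M ** c) $ i $ l =
       (if l = j then M $ i $ j / M $ r $ j else M $ i $ l - M $ i $ j * M $ r $ l / M $ r $ j)"
proof -
  define \<beta> where "\<beta> l = (if l = j then 1 / M $ r $ j else - (M $ r $ l / M $ r $ j))" for l
  define c where "c = (\<chi> k l. (if l \<noteq> j then (if k = l then 1 else 0) else 0) + (if k = j then \<beta> l else 0))"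
  have "upper_triangular c"
    using assms(2) by (auto simp: upper_triangular_def c_def \<beta>_def)
  moreover have "invertible c"
    using assms(1) by (intro invertible_upper_triangular[OF \<open>upper_triangular c\<close>]) (simp add: c_def \<beta>_def)
  moreover have "(M ** c) $ i $ l =
      (if l = j then M $ i $ j / M $ r $ j else M $ i $ l - M $ i $ j * M $ r $ l / M $ r $ j)" for i l
  proof -
    have "(M ** c) $ i $ l = (if l \<noteq> j then M $ i $ l else 0) + M $ i $ j * \<beta> l"
      unfolding matrix_matrix_mult_def c_def
      by (cases "l = j") (simp_all add: distrib_left sum.distrib sum_mult_delta_right)
    then show ?thesis by (simp add: \<beta>_def)
  qed
  ultimately show ?thesis using that by blast
qed

lemma row_reduction_upper:
  fixes M :: "'a::field^'n::{finite,wellorder}^'n::{finite,wellorder}"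
  assumes "M $ r = axis j 1"
  obtains b where "invertible b" "upper_triangular b"
    "\<And>i l. (b ** M) $ i $ l = (if i < r \<and> l = j then 0 else M $ i $ l)"
proof -
  define b where "b = (\<chi> i k. (if i = k then 1 else 0) + (if r = k then (if i < r then - M $ i $ j else 0) else 0))"
  have "upper_triangular b"
    by (auto simp: upper_triangular_def b_def)
  moreover have "invertible b"
    by (intro invertible_upper_triangular[OF \<open>upper_triangular b\<close>]) (auto simp: b_def)
  moreover have "(b ** M) $ i $ l = (if i < r \<and> l = j then 0 else M $ i $ l)" for i l
  proof -
    have "(b ** M) $ i $ l = M $ i $ l + (if i < r then - M $ i $ j * M $ r $ l else 0)"
      unfolding matrix_matrix_mult_def b_def
      by (simp add: distrib_right sum.distrib sum_mult_delta_left)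
    then show ?thesis using assms by (auto simp: axis_def)
  qed
  ultimately show ?thesis using that by blast
qed

definition permutation_rows :: "'a::{zero,one}^'n::finite^'n::finite \<Rightarrow> 'n set \<Rightarrow> bool" where
  "permutation_rows M R \<longleftrightarrow> (\<forall>i\<in>R. \<exists>j. M $ i = axis j 1 \<and> column j M = axis i 1)"

lemma invertible_row_nonzero:
  fixes M :: "'a::semiring_1^'n^'n"
  assumes "invertible M"
  shows "\<exists>l. M $ r $ l \<noteq> 0"
proof (rule ccontr)
  assume "\<nexists>l. M $ r $ l \<noteq> 0"
  then have "(M ** matrix_inv M) $ r $ r = 0" by (simp add: matrix_matrix_mult_def)
  then show False using assms by (simp add: matrix_inv_right mat_def)
qed

lemma permutation_rows_pivot:
  assumes "permutation_rows M R" "i \<in> R" "k \<notin> R"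
  obtains \<sigma> where "M $ i = axis \<sigma> 1" "column \<sigma> M = axis i 1" "M $ k $ \<sigma> = 0"
proof -
  obtain \<sigma> where \<sigma>: "M $ i = axis \<sigma> 1" "column \<sigma> M = axis i 1"
    using assms(1,2) unfolding permutation_rows_def by blast
  have "M $ k $ \<sigma> = column \<sigma> M $ k" by (simp add: column_def)
  also have "\<dots> = 0" using \<sigma>(2) assms(2,3) by (auto simp: axis_def)
  finally show ?thesis using that \<sigma> by blast
qed

lemma permutation_rows_eliminate:
  fixes M N :: "'a::field^'n::{finite,wellorder}^'n::{finite,wellorder}"
  assumes "permutation_rows M {r<..}" "M $ r $ j \<noteq> 0"
    and N: "\<And>i l. N $ i $ l = (if i < r \<and> l = j then 0
      else if l = j then M $ i $ j / M $ r $ j else M $ i $ l - M $ i $ j * M $ r $ l / M $ r $ j)"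
  shows "permutation_rows N {r..}"
  unfolding permutation_rows_def
proof
  have lower: "\<exists>\<sigma>. M $ i = axis \<sigma> 1 \<and> column \<sigma> M = axis i 1 \<and> M $ r $ \<sigma> = 0 \<and> M $ i $ j = 0 \<and> \<sigma> \<noteq> j"
    if "r < i" for i
  proof -
    obtain \<sigma> where "M $ i = axis \<sigma> 1" "column \<sigma> M = axis i 1" "M $ r $ \<sigma> = 0"
      using permutation_rows_pivot[OF assms(1), of i r] \<open>r < i\<close> by auto
    then show ?thesis using assms(2) by (auto simp: axis_def)
  qed
  fix i assume "i \<in> {r..}"
  then consider "i = r" | "r < i" by fastforce
  then show "\<exists>j. N $ i = axis j 1 \<and> column j N = axis i 1"
  proof cases
    case 1
    have "M $ k $ j = 0" if "r < k" for k
      using lower[OF that] by blast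
    then have "column j N = axis r 1"
      using assms(2) by (auto simp: vec_eq_iff column_def N axis_def not_less_iff_gr_or_eq)
    moreover have "N $ r = axis j 1"
      using assms(2) by (simp add: vec_eq_iff N axis_def)
    ultimately show ?thesis using 1 by blast
  next
    case 2
    then obtain \<sigma> where \<sigma>: "M $ i = axis \<sigma> 1" "column \<sigma> M = axis i 1" "M $ r $ \<sigma> = 0"
      "M $ i $ j = 0" "\<sigma> \<noteq> j"
      using lower by blast
    have "N $ i = axis \<sigma> 1"
      using 2 \<sigma> by (simp add: vec_eq_iff N)
    moreover have "column \<sigma> N = axis i 1"
      using \<sigma> by (simp add: vec_eq_iff N column_def)
    ultimately show ?thesis by blast
  qed
qed

text \<open>One step of Gaussian elimination, on the lowest row \<open>r\<close> not yet reduced: with \<open>j\<close> the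
  leftmost nonzero entry of row \<open>r\<close>, column operations only add multiples of column \<open>j\<close> to
  later columns, and row operations only add multiples of row \<open>r\<close> to earlier rows, so both are
  upper triangular.\<close>

lemma permutation_rows_extend:
  fixes M :: "'a::field^'n::{finite,wellorder}^'n::{finite,wellorder}"
  assumes "invertible M" "permutation_rows M {r<..}"
  obtains b c where "invertible b" "upper_triangular b" "invertible c" "upper_triangular c"
    "permutation_rows (b ** M ** c) {r..}"
proof -
  define j where "j = (LEAST l. M $ r $ l \<noteq> 0)"
  have Mrj: "M $ r $ j \<noteq> 0"
    unfolding j_def using invertible_row_nonzero[OF assms(1)] by (rule LeastI_ex)
  have "M $ r $ l = 0" if "l < j" for l
    using that not_less_Least unfolding j_def by blast
  then obtain c where c: "invertible c" "upper_triangular c" and Mc: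
    "\<And>i l. (M ** c) $ i $ l =
       (if l = j then M $ i $ j / M $ r $ j else M $ i $ l - M $ i $ j * M $ r $ l / M $ r $ j)"
    using column_reduction_upper[OF Mrj] by blast
  have "(M ** c) $ r = axis j 1"
    using Mrj by (simp add: vec_eq_iff Mc axis_def)
  then obtain b where b: "invertible b" "upper_triangular b" and bMc:
    "\<And>i l. (b ** (M ** c)) $ i $ l = (if i < r \<and> l = j then 0 else (M ** c) $ i $ l)"
    using row_reduction_upper by blast
  have "permutation_rows (b ** (M ** c)) {r..}"
    using assms(2) Mrj by (rule permutation_rows_eliminate) (simp add: bMc Mc)
  then show ?thesis
    using that b c by (simp add: matrix_mul_assoc)
qed

lemma upper_reduction_to_permutation_rows:
  fixes g :: "'a::field^'n::{finite,wellorder}^'n::{finite,wellorder}"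
  assumes "invertible g" "\<And>i i'. i \<in> R \<Longrightarrow> i \<le> i' \<Longrightarrow> i' \<in> R"
  shows "\<exists>b c. invertible b \<and> upper_triangular b \<and> invertible c \<and> upper_triangular c \<and>
    permutation_rows (b ** g ** c) R"
proof -
  have "finite R" by simp
  then show ?thesis using assms(2)
  proof (induction R rule: finite_linorder_min_induct)
    case empty
    show ?case
      using invertible_mat_1 upper_triangular_mat unfolding permutation_rows_def by blast
  next
    case (insert r R)
    have "x \<in> R \<longleftrightarrow> r < x" for x
      using insert.hyps(2) insert.prems[of r x] by (auto simp: le_less)
    then have "R = {r<..}" by auto
    with insert.IH obtain b c where bc: "invertible b" "upper_triangular b" "invertible c" "upper_triangular c"
      and "permutation_rows (b ** g ** c) {r<..}"
      by fastforce
    moreover have "invertible (b ** g ** c)"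
      using bc assms(1) by (simp add: invertible_mult)
    ultimately obtain b' c' where bc': "invertible b'" "upper_triangular b'" "invertible c'" "upper_triangular c'"
      and "permutation_rows (b' ** (b ** g ** c) ** c') {r..}"
      using permutation_rows_extend by metis
    moreover have "b' ** (b ** g ** c) ** c' = (b' ** b) ** g ** (c ** c')"
      by (simp add: matrix_mul_assoc)
    moreover have "{r..} = insert r R"
      using \<open>R = {r<..}\<close> by auto
    ultimately show ?case
      using bc bc' by (metis invertible_mult upper_triangular_mult)
  qed
qed

theorem bruhat_decomposition:
  fixes g :: "'a::field^'n::{finite,wellorder}^'n::{finite,wellorder}"
  assumes "invertible g"
  obtains b c w where "invertible b" "upper_triangular b" "invertible c" "upper_triangular c"
    "w permutes UNIV" "b ** g ** c = (\<chi> i j. if i = w j then 1 else 0)"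
proof -
  obtain b c where bc: "invertible b" "upper_triangular b" "invertible c" "upper_triangular c"
    and "permutation_rows (b ** g ** c) UNIV"
    using upper_reduction_to_permutation_rows[OF assms, of UNIV] by blast
  then have "\<forall>i. \<exists>j. (b ** g ** c) $ i = axis j 1 \<and> column j (b ** g ** c) = axis i 1"
    unfolding permutation_rows_def by blast
  then obtain \<sigma> where "\<forall>i. (b ** g ** c) $ i = axis (\<sigma> i) 1 \<and> column (\<sigma> i) (b ** g ** c) = axis i 1"
    by metis
  then have \<sigma>: "\<And>i. (b ** g ** c) $ i = axis (\<sigma> i) 1" "\<And>i. column (\<sigma> i) (b ** g ** c) = axis i 1"
    by blast+
  have "inj \<sigma>"
    by (rule injI) (metis \<sigma>(2) axis_eq_axis zero_neq_one)
  then have "bij \<sigma>"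
    using finite_UNIV_inj_surj[of \<sigma>] by (simp add: bij_def)
  then have \<sigma>_perm: "\<sigma> permutes UNIV"
    by (rule bij_imp_permutes) simp
  have "b ** g ** c = (\<chi> i j. if i = inv \<sigma> j then 1 else 0)"
    using \<sigma>(1) permutes_inv_eq[OF \<sigma>_perm] by (simp add: vec_eq_iff axis_def eq_commute)
  with bc permutes_inv[OF \<sigma>_perm] show ?thesis
    using that by blast
qed

section \<open>Flags\<close>

definition coord_subspace :: "nat \<Rightarrow> ('a::zero^'n::{finite,wellorder}) set" where
  "coord_subspace k = {x. \<forall>j. k < idx j \<longrightarrow> x $ j = 0}"

lemma flag_eq_image: "flag g k = (\<lambda>x. g *v x) ` coord_subspace k"
  by (auto simp: flag_def coord_subspace_def)

lemma axis_in_coord_subspace: "axis j 1 \<in> coord_subspace (idx j)"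
  by (simp add: coord_subspace_def axis_def)

lemma upper_triangular_mult_coord_subspace:
  fixes c :: "'a::semiring_1^'n::{finite,wellorder}^'n::{finite,wellorder}"
  assumes "upper_triangular c" "x \<in> coord_subspace k"
  shows "c *v x \<in> coord_subspace k"
proof -
  have "c $ i $ j * x $ j = 0" if "k < idx i" for i j
  proof (cases "j < i")
    case True
    then show ?thesis using assms(1) by (simp add: upper_triangular_def)
  next
    case False
    then have "idx i \<le> idx j" by (simp add: idx_le_iff not_less)
    with that have "k < idx j" by linarith
    then show ?thesis using assms(2) by (simp add: coord_subspace_def)
  qed
  then show ?thesis by (simp add: coord_subspace_def matrix_vector_mult_def)
qed

lemma flag_mult_upper_tri:
  fixes c :: "'n::{finite,wellorder} cmat"
  assumes "c \<in> upper_tri"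
  shows "flag (g ** c) = flag g"
proof
  fix k
  have c: "invertible c" "upper_triangular c" and c': "upper_triangular (matrix_inv c)"
    using assms upper_triangular_matrix_inv by (auto simp: upper_tri_iff)
  have "(\<lambda>x. c *v x) ` coord_subspace k = coord_subspace k"
  proof
    show "(\<lambda>x. c *v x) ` coord_subspace k \<subseteq> coord_subspace k"
      using upper_triangular_mult_coord_subspace[OF c(2)] by blast
    show "coord_subspace k \<subseteq> (\<lambda>x. c *v x) ` coord_subspace k"
    proof
      fix x :: "(complex, 'n) vec" assume "x \<in> coord_subspace k"
      moreover have "x = c *v (matrix_inv c *v x)"
        by (simp add: matrix_vector_mul_assoc matrix_inv_right c(1))
      ultimately show "x \<in> (\<lambda>x. c *v x) ` coord_subspace k"
        using upper_triangular_mult_coord_subspace[OF c'] by blast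
    qed
  qed
  have "flag (g ** c) k = (\<lambda>x. g *v x) ` ((\<lambda>x. c *v x) ` coord_subspace k)"
    unfolding flag_eq_image by (simp add: image_image matrix_vector_mul_assoc)
  also have "\<dots> = flag g k"
    by (simp only: \<open>(\<lambda>x. c *v x) ` coord_subspace k = coord_subspace k\<close> flag_eq_image)
  finally show "flag (g ** c) k = flag g k" .
qed

lemma flag_eq_imp_upper_tri:
  fixes g g' :: "'n::{finite,wellorder} cmat"
  assumes "invertible g" "invertible g'" "flag g = flag g'"
  shows "matrix_inv g ** g' \<in> upper_tri"
proof -
  let ?d = "matrix_inv g ** g'"
  have "?d $ i $ j = 0" if "j < i" for i j
  proof -
    have "g' *v axis j 1 \<in> flag g (idx j)"
      unfolding assms(3) flag_eq_image using axis_in_coord_subspace by blast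
    then obtain x where x: "x \<in> coord_subspace (idx j)" "g' *v axis j 1 = g *v x"
      unfolding flag_eq_image by auto
    have "?d $ i $ j = (matrix_inv g *v (g' *v axis j 1)) $ i"
      by (simp add: matrix_vector_mul_assoc matrix_vector_mult_axis)
    also have "\<dots> = x $ i"
      by (simp add: x(2) matrix_vector_mul_assoc matrix_inv_left assms(1))
    also have "\<dots> = 0"
      using x(1) that idx_less_iff unfolding coord_subspace_def by blast
    finally show ?thesis .
  qed
  moreover have "invertible ?d"
    using assms(1,2) invertible_matrix_inv invertible_mult by blast
  ultimately show ?thesis
    by (simp add: upper_tri_iff upper_triangular_def)
qed

section \<open>Topology of the flag variety\<close>

lemma continuous_on_det [continuous_intros]:
  fixes f :: "'a::topological_space \<Rightarrow> 'b::real_normed_field^'n^'n"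
  assumes "continuous_on S f"
  shows "continuous_on S (\<lambda>x. det (f x))"
  unfolding det_def by (intro continuous_intros assms)

lemma continuous_on_matrix_mult [continuous_intros]:
  fixes f :: "'a::topological_space \<Rightarrow> 'b::real_normed_algebra_1^'n^'m" and g :: "'a \<Rightarrow> 'b^'p^'n"
  assumes "continuous_on S f" "continuous_on S g"
  shows "continuous_on S (\<lambda>x. f x ** g x)"
  unfolding matrix_matrix_mult_def by (intro continuous_intros assms)

lemma continuous_on_matrix_inv:
  "continuous_on {A :: 'a::real_normed_field^'n^'n. invertible A} matrix_inv"
proof -
  have column_replaced: "continuous_on S (\<lambda>A. if s = i then a else A $ r $ s)" for S s i r and a :: 'a
    by (cases "s = i") (simp_all add: continuous_intros)
  have numerator: "continuous_on {A :: 'a^'n^'n. invertible A} (\<lambda>A. det (\<chi> r s. if s = i then axis j 1 $ r else A $ r $ s))"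
    for i j
    by (intro continuous_on_det continuous_on_vec_lambda column_replaced)
  have "continuous_on {A :: 'a^'n^'n. invertible A}
      (\<lambda>A. \<chi> i j. det (\<chi> r s. if s = i then axis j 1 $ r else A $ r $ s) / det A)"
    by (intro continuous_on_vec_lambda continuous_on_divide numerator continuous_on_det continuous_on_id)
      (simp add: invertible_det_nz)
  then show ?thesis
    by (rule continuous_on_eq) (simp add: vec_eq_iff matrix_inv_nth_cramer)
qed

lemma quotient_map_quotient_topology:
  "quotient_map X (topology (\<lambda>U. U \<subseteq> f ` topspace X \<and> openin X {x \<in> topspace X. f x \<in> U})) f"
    (is "quotient_map X (topology ?open) f")
proof -
  have "istopology ?open"
    unfolding istopology_def
  proof (rule conjI; intro allI impI)
    fix U V assume "?open U" "?open V"
    moreover have "{x \<in> topspace X. f x \<in> U \<inter> V} = {x \<in> topspace X. f x \<in> U} \<inter> {x \<in> topspace X. f x \<in> V}"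
      by blast
    ultimately show "?open (U \<inter> V)"
      by (simp add: openin_Int le_infI1)
  next
    fix \<U> assume "\<forall>U\<in>\<U>. ?open U"
    moreover have "{x \<in> topspace X. f x \<in> \<Union>\<U>} = (\<Union>U\<in>\<U>. {x \<in> topspace X. f x \<in> U})"
      by blast
    ultimately show "?open (\<Union>\<U>)"
      by (auto intro!: openin_Union)
  qed
  then have open_eq: "openin (topology ?open) = ?open" by simp
  have "topspace (topology ?open) = f ` topspace X"
  proof
    show "topspace (topology ?open) \<subseteq> f ` topspace X"
      using openin_topspace[of "topology ?open"] by (simp add: open_eq)
    have "{x \<in> topspace X. f x \<in> f ` topspace X} = topspace X" by blast
    then show "f ` topspace X \<subseteq> topspace (topology ?open)"
      by (intro openin_subset) (simp add: open_eq)
  qed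
  then show ?thesis
    by (simp add: quotient_map_def open_eq)
qed

lemma quotient_map_flag: "quotient_map (top_of_set GL) flag_top flag"
  using quotient_map_quotient_topology[of "top_of_set GL" flag]
  by (simp add: flag_top_def flag_variety_def)

lemma topspace_flag_top: "topspace flag_top = flag ` GL"
  using quotient_map_flag unfolding quotient_map_def by auto

lemma flag_in_bruhat_cell:
  fixes g :: "'n::{finite,wellorder} cmat"
  assumes "g \<in> GL"
  obtains b w where "b \<in> upper_tri" "w permutes UNIV" "b ** perm_mat w \<in> GL"
    "flag g = flag (b ** perm_mat w)"
proof -
  have "invertible g" using assms by (simp add: GL_def)
  then obtain b c w where "invertible b" "upper_triangular b" "invertible c" "upper_triangular c"
    and w: "w permutes UNIV" and "b ** g ** c = (\<chi> i j. if i = w j then 1 else 0)"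
    by (rule bruhat_decomposition)
  then have b: "b \<in> upper_tri" and c: "c \<in> upper_tri" and bgc: "b ** g ** c = perm_mat w"
    by (simp_all add: upper_tri_iff perm_mat_def)
  have "matrix_inv b ** perm_mat w = g ** c"
    using b by (simp add: bgc[symmetric] matrix_mul_assoc matrix_inv_left upper_tri_iff)
  moreover have "g ** c \<in> GL"
    using \<open>invertible g\<close> c by (simp add: GL_def upper_tri_iff invertible_mult)
  moreover have "flag g = flag (g ** c)"
    using flag_mult_upper_tri[OF c] by simp
  ultimately show ?thesis
    using that[OF upper_tri_matrix_inv[OF b] w] by simp
qed

lemma closed_upper_stable_eq_Union_schubert:
  fixes X :: "(nat \<Rightarrow> (complex, 'n::{finite,wellorder}) vec set) set"
  assumes closed: "closedin flag_top X"
    and stable: "\<And>g b. g \<in> GL \<Longrightarrow> b \<in> upper_tri \<Longrightarrow> flag g \<in> X \<Longrightarrow> flag (b ** g) \<in> X"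
  shows "X = (\<Union>w\<in>{w. w permutes UNIV \<and> schubert w \<subseteq> X}. schubert w)"
proof
  show "X \<subseteq> (\<Union>w\<in>{w. w permutes UNIV \<and> schubert w \<subseteq> X}. schubert w)"
  proof
    fix F assume "F \<in> X"
    then obtain g where g: "g \<in> GL" "F = flag g"
      using closedin_subset[OF closed] topspace_flag_top by auto
    obtain b w where b: "b \<in> upper_tri" and w: "w permutes UNIV"
      and bw: "b ** perm_mat w \<in> GL" "flag g = flag (b ** perm_mat w)"
      using flag_in_bruhat_cell[OF g(1)] by blast
    let ?cell = "{flag (b' ** perm_mat w) | b'. b' \<in> upper_tri}"
    have "?cell \<subseteq> X"
    proof
      fix G assume "G \<in> ?cell"
      then obtain b' where b': "b' \<in> upper_tri" "G = flag (b' ** perm_mat w)" by blast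
      have "(b' ** matrix_inv b) ** (b ** perm_mat w) = b' ** (matrix_inv b ** b) ** perm_mat w"
        by (simp add: matrix_mul_assoc)
      also have "\<dots> = b' ** perm_mat w"
        using b by (simp add: matrix_inv_left upper_tri_iff)
      finally show "G \<in> X"
        using stable[OF bw(1) upper_tri_mult[OF b'(1) upper_tri_matrix_inv[OF b]]] \<open>F \<in> X\<close> g(2) bw(2) b'(2)
        by simp
    qed
    then have "schubert w \<subseteq> X"
      unfolding schubert_def using closed by (rule closure_of_minimal)
    have "F \<in> ?cell"
      using b g(2) bw(2) by blast
    then have "F \<in> schubert w"
      unfolding schubert_def using \<open>?cell \<subseteq> X\<close> closedin_subset[OF closed]
      by (meson closure_of_subset subset_trans subsetD)
    then show "F \<in> (\<Union>w\<in>{w. w permutes UNIV \<and> schubert w \<subseteq> X}. schubert w)"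
      using w \<open>schubert w \<subseteq> X\<close> by blast
  qed
qed blast

section \<open>Hessenberg spaces\<close>

lemma hess_space_mult_upper_left:
  fixes b :: "'n::{finite,wellorder} cmat"
  assumes "upper_triangular b" "A \<in> hess_space h"
  shows "b ** A \<in> hess_space h"
proof -
  have "b $ k $ m * A $ m $ l = 0" if "h l < idx k" for k l m
  proof (cases "m < k")
    case True
    then show ?thesis using assms(1) by (simp add: upper_triangular_def)
  next
    case False
    then have "h l < idx m" using that idx_le_iff[of k m] by (simp add: not_less)
    then show ?thesis using assms(2) by (simp add: hess_space_def)
  qed
  then show ?thesis by (auto simp: hess_space_def matrix_matrix_mult_def intro!: sum.neutral)
qed

lemma hess_space_mult_upper_right:
  fixes c :: "'n::{finite,wellorder} cmat"
  assumes "mono h" "upper_triangular c" "A \<in> hess_space h"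
  shows "A ** c \<in> hess_space h"
proof -
  have "A $ k $ m * c $ m $ l = 0" if "h l < idx k" for k l m
  proof (cases "l < m")
    case True
    then show ?thesis using assms(2) by (simp add: upper_triangular_def)
  next
    case False
    then have "h m \<le> h l" using assms(1) by (simp add: monoD not_less)
    then show ?thesis using assms(3) that by (simp add: hess_space_def)
  qed
  then show ?thesis by (auto simp: hess_space_def matrix_matrix_mult_def intro!: sum.neutral)
qed

lemma closed_hess_space:
  fixes h :: "'n::{finite,wellorder} \<Rightarrow> nat"
  shows "closed (hess_space h)"
proof -
  have "closed {A :: 'n cmat. h l < idx k \<longrightarrow> A $ k $ l = 0}" for k l
    by (cases "h l < idx k") (simp_all add: closed_Collect_eq continuous_on_component continuous_on_id)
  then show ?thesis
    unfolding hess_space_def by (intro closed_Collect_all)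
qed

lemma Eunit_nth: "Eunit p q $ i $ j = (if i = p \<and> j = q then 1 else 0)"
  by (simp add: Eunit_def)

lemma matrix_mult_Eunit_nth: "(A ** Eunit p q ** B) $ i $ j = A $ i $ p * B $ q $ j"
proof -
  have "(A ** Eunit p q) $ i $ k = (if q = k then A $ i $ p else 0)" for k
    by (cases "k = q") (simp_all add: Eunit_def matrix_matrix_mult_def sum_mult_delta_right)
  then show ?thesis
    by (simp add: matrix_matrix_mult_def[of _ B] sum_mult_delta_left)
qed

lemma upper_triangular_conj_Eunit:
  fixes A B :: "'n::{finite,wellorder} cmat"
  assumes "upper_triangular A" "upper_triangular B" "\<And>i. p \<le> i" "\<And>j. j \<le> q"
  shows "A ** Eunit p q ** B = mat (A $ p $ p * B $ q $ q) ** Eunit p q"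
proof -
  have "A $ i $ p = 0" if "i \<noteq> p" for i
    using assms(1) assms(3)[of i] that by (simp add: upper_triangular_def)
  moreover have "B $ q $ j = 0" if "j \<noteq> q" for j
    using assms(2) assms(4)[of j] that by (simp add: upper_triangular_def)
  ultimately show ?thesis
    by (auto simp: vec_eq_iff matrix_mult_Eunit_nth mat_mult_nth Eunit_nth)
qed

lemma Least_True_le: "(LEAST i::'n::{finite,wellorder}. True) \<le> i"
  by (rule Least_le) simp

lemma le_Greatest_True: "i \<le> (GREATEST i::'n::{finite,wellorder}. True)"
proof -
  have "(GREATEST i::'n. True) = Max UNIV"
    by (rule Greatest_equality) auto
  then show ?thesis by simp
qed

definition XH_lift :: "'n cmat set \<Rightarrow> 'n::{finite,wellorder} cmat set" where
  "XH_lift H = {g \<in> GL. matrix_inv g ** Eunit (LEAST i. True) (GREATEST i. True) ** g \<in> H}"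

lemma XH_eq_image_XH_lift: "XH H = flag ` XH_lift H"
  by (auto simp: XH_def XH_lift_def)

lemma XH_lift_mult_upper_tri:
  fixes h :: "'n::{finite,wellorder} \<Rightarrow> nat"
  assumes "mono h" "g \<in> XH_lift (hess_space h)" "b \<in> upper_tri" "c \<in> upper_tri"
  shows "b ** g ** c \<in> XH_lift (hess_space h)"
proof -
  let ?E = "Eunit (LEAST i::'n. True) (GREATEST i. True)"
  let ?s = "matrix_inv b $ (LEAST i. True) $ (LEAST i. True) * b $ (GREATEST i. True) $ (GREATEST i. True)"
  have g: "invertible g" "matrix_inv g ** ?E ** g \<in> hess_space h"
    using assms(2) by (auto simp: XH_lift_def GL_def)
  have b: "invertible b" "upper_triangular b" "upper_triangular (matrix_inv b)"
    and c: "invertible c" "upper_triangular c" "upper_triangular (matrix_inv c)"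
    using assms(3,4) upper_triangular_matrix_inv by (auto simp: upper_tri_iff)
  have "matrix_inv (b ** g ** c) ** ?E ** (b ** g ** c)
      = matrix_inv c ** (matrix_inv g ** (matrix_inv b ** ?E ** b) ** g) ** c"
    using b(1) c(1) g(1) by (simp add: matrix_inv_mult invertible_mult matrix_mul_assoc)
  also have "\<dots> = matrix_inv c ** (matrix_inv g ** mat ?s ** ?E ** g) ** c"
    using b(3,2) by (simp add: upper_triangular_conj_Eunit Least_True_le le_Greatest_True matrix_mul_assoc)
  also have "\<dots> = matrix_inv c ** (mat ?s ** matrix_inv g ** ?E ** g) ** c"
    by (simp only: mat_mult_commute[of ?s "matrix_inv g", symmetric])
  also have "\<dots> = (matrix_inv c ** mat ?s) ** (matrix_inv g ** ?E ** g) ** c"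
    by (simp add: matrix_mul_assoc)
  finally have "matrix_inv (b ** g ** c) ** ?E ** (b ** g ** c) \<in> hess_space h"
    using assms(1) g(2) c(2,3)
    by (simp add: hess_space_mult_upper_left hess_space_mult_upper_right upper_triangular_mult upper_triangular_mat)
  moreover have "b ** g ** c \<in> GL"
    using b(1) c(1) g(1) by (simp add: GL_def invertible_mult)
  ultimately show ?thesis by (simp add: XH_lift_def)
qed

lemma flag_in_XH_iff:
  fixes h :: "'n::{finite,wellorder} \<Rightarrow> nat"
  assumes "mono h" "g \<in> GL"
  shows "flag g \<in> XH (hess_space h) \<longleftrightarrow> g \<in> XH_lift (hess_space h)"
proof
  assume "flag g \<in> XH (hess_space h)"
  then obtain g' where g': "g' \<in> XH_lift (hess_space h)" "flag g' = flag g"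
    by (auto simp: XH_eq_image_XH_lift)
  then have "invertible g'" by (simp add: XH_lift_def GL_def)
  have "matrix_inv g' ** g \<in> upper_tri"
    using \<open>invertible g'\<close> assms(2) g'(2) by (intro flag_eq_imp_upper_tri) (simp_all add: GL_def)
  then have "mat 1 ** g' ** (matrix_inv g' ** g) \<in> XH_lift (hess_space h)"
    by (rule XH_lift_mult_upper_tri[OF assms(1) g'(1) mat_1_upper_tri])
  then show "g \<in> XH_lift (hess_space h)"
    using \<open>invertible g'\<close> by (simp add: matrix_mul_assoc matrix_inv_right)
qed (auto simp: XH_eq_image_XH_lift)

lemma closedin_XH_lift:
  fixes H :: "'n::{finite,wellorder} cmat set"
  assumes "closed H"
  shows "closedin (top_of_set GL) (XH_lift H)"
proof -
  let ?conj = "\<lambda>g::'n cmat. matrix_inv g ** Eunit (LEAST i. True) (GREATEST i. True) ** g"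
  have "continuous_on GL ?conj"
    unfolding GL_def by (intro continuous_intros continuous_on_matrix_inv)
  then have "closedin (top_of_set GL) (GL \<inter> ?conj -` H)"
    using assms by (rule continuous_closedin_preimage)
  moreover have "GL \<inter> ?conj -` H = XH_lift H"
    by (auto simp: XH_lift_def)
  ultimately show ?thesis by simp
qed

lemma closedin_XH:
  fixes h :: "'n::{finite,wellorder} \<Rightarrow> nat"
  assumes "mono h"
  shows "closedin flag_top (XH (hess_space h))"
proof -
  have "\<forall>U. U \<subseteq> topspace flag_top \<longrightarrow>
      (closedin (top_of_set GL) {g. g \<in> topspace (top_of_set GL) \<and> flag g \<in> U} \<longleftrightarrow> closedin flag_top U)"
    using quotient_map_flag unfolding quotient_map_closedin by (rule conjunct2)
  moreover have "XH (hess_space h) \<subseteq> topspace flag_top"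
    by (auto simp: topspace_flag_top XH_eq_image_XH_lift XH_lift_def)
  ultimately have "closedin flag_top (XH (hess_space h)) \<longleftrightarrow>
      closedin (top_of_set GL) {g. g \<in> topspace (top_of_set GL) \<and> flag g \<in> XH (hess_space h)}"
    by blast
  also have "{g. g \<in> topspace (top_of_set GL) \<and> flag g \<in> XH (hess_space h)} = XH_lift (hess_space h)"
    using flag_in_XH_iff[OF assms] by (auto simp: XH_lift_def)
  finally show ?thesis
    using closedin_XH_lift[OF closed_hess_space] by blast
qed

lemma XH_upper_stable:
  fixes h :: "'n::{finite,wellorder} \<Rightarrow> nat"
  assumes "mono h" "g \<in> GL" "b \<in> upper_tri" "flag g \<in> XH (hess_space h)"
  shows "flag (b ** g) \<in> XH (hess_space h)"
proof -
  have "g \<in> XH_lift (hess_space h)"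
    using flag_in_XH_iff[OF assms(1,2)] assms(4) by simp
  then have "b ** g ** mat 1 \<in> XH_lift (hess_space h)"
    by (rule XH_lift_mult_upper_tri[OF assms(1) _ assms(3) mat_1_upper_tri])
  then show ?thesis
    by (simp add: XH_eq_image_XH_lift)
qed

theorem mainTheorem2:
  fixes h :: "'n::{finite,wellorder} \<Rightarrow> nat"
  assumes "hessenberg_fun h"
  shows "\<exists>W. W \<subseteq> {w. w permutes (UNIV :: 'n set)} \<and>
            XH (hess_space h) = (\<Union>w\<in>W. schubert w)"
proof -
  have "mono h" using assms by (simp add: hessenberg_fun_def)
  define W where "W = {w. w permutes UNIV \<and> schubert w \<subseteq> XH (hess_space h)}"
  have "closedin flag_top (XH (hess_space h))"
    using \<open>mono h\<close> by (rule closedin_XH)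
  moreover have "\<And>g b. g \<in> GL \<Longrightarrow> b \<in> upper_tri \<Longrightarrow> flag g \<in> XH (hess_space h) \<Longrightarrow>
      flag (b ** g) \<in> XH (hess_space h)"
    by (rule XH_upper_stable[OF \<open>mono h\<close>])
  ultimately have "XH (hess_space h) = (\<Union>w\<in>W. schubert w)"
    unfolding W_def by (rule closed_upper_stable_eq_Union_schubert)
  moreover have "W \<subseteq> {w. w permutes UNIV}"
    unfolding W_def by blast
  ultimately show ?thesis by blast
qed

end
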